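(* Let $L\ge1$, $\boldsymbol{W}\in\mathbb{R}^{n\times d}$, $\boldsymbol{\alpha}_\ell\in\mathbb{R}^n$ ($\ell=1,\dots,L$), $\boldsymbol{\beta}_\ell\in\mathbb{R}^n$ and $\boldsymbol{b}_\ell\in\mathbb{R}^n$ ($\ell=0,\dots,L-1$), $\boldsymbol{b}_L\in\mathbb{R}^d$, and let $\sigma_1,\dots,\sigma_L:\mathbb{R}^n\to\mathbb{R}^n$ be differentiable elementwise activations. Define $$\boldsymbol{z}_0=\boldsymbol{\beta}_0\odot\boldsymbol{W}\boldsymbol{x}+\boldsymbol{b}_0,\qquad \boldsymbol{z}_\ell=\boldsymbol{\beta}_\ell\odot\boldsymbol{W}\boldsymbol{x}+\boldsymbol{\alpha}_\ell\odot\sigma_\ell(\boldsymbol{z}_{\ell-1})+\boldsymbol{b}_\ell\ (1\le\ell\le L-1),$$ $$\mathrm{GradNetC}(\boldsymbol{x})=\boldsymbol{W}^\top[\boldsymbol{\alpha}_L\odot\sigma_L(\boldsymbol{z}_{L-1})]+\boldsymbol{b}_L .$$ Then $\mathrm{GradNetC}=\nabla F$ for some $F\in C^1(\mathbb{R}^d)$, i.e. it is a GradNet.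
   Context: $\odot$ is the entrywise (Hadamard) product. An elementwise activation $\sigma:\mathbb{R}^n\to\mathbb{R}^n$ has the form $\sigma(\boldsymbol{z})=(s_1(z_1),\dots,s_n(z_n))$ with scalar functions $s_j$. A GradNet is a function $f:\mathbb{R}^d\to\mathbb{R}^d$ with $f=\nabla F$ for some continuously differentiable $F:\mathbb{R}^d\to\mathbb{R}$. *)

theory Defs
  imports "HOL-Analysis.Analysis"
begin

definition hadamard :: "real^'n \<Rightarrow> real^'n \<Rightarrow> real^'n" (infixl "\<odot>" 70) where
  "x \<odot> y = (\<chi> i. x $ i * y $ i)"

definition diff_elementwise_activation :: "(real^'n \<Rightarrow> real^'n) \<Rightarrow> bool" where
  "diff_elementwise_activation \<sigma> \<longleftrightarrow>
     (\<exists>s :: 'n \<Rightarrow> real \<Rightarrow> real.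
        (\<forall>z. \<sigma> z = (\<chi> j. s j (z $ j))) \<and> (\<forall>j t. s j differentiable (at t)))"

definition is_gradnet :: "(real^'d \<Rightarrow> real^'d) \<Rightarrow> bool" where
  "is_gradnet f \<longleftrightarrow>
     (\<exists>F :: real^'d \<Rightarrow> real.
        (\<forall>x. (F has_derivative (\<lambda>h. f x \<bullet> h)) (at x)) \<and> continuous_on UNIV f)"

fun gnc_z :: "real^'d^'n \<Rightarrow> (nat \<Rightarrow> real^'n) \<Rightarrow> (nat \<Rightarrow> real^'n) \<Rightarrow> (nat \<Rightarrow> real^'n)
              \<Rightarrow> (nat \<Rightarrow> real^'n \<Rightarrow> real^'n) \<Rightarrow> nat \<Rightarrow> real^'d \<Rightarrow> real^'n" where
  "gnc_z W \<alpha> \<beta> b \<sigma> 0 x = \<beta> 0 \<odot> (W *v x) + b 0"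
| "gnc_z W \<alpha> \<beta> b \<sigma> (Suc l) x =
     \<beta> (Suc l) \<odot> (W *v x) + \<alpha> (Suc l) \<odot> \<sigma> (Suc l) (gnc_z W \<alpha> \<beta> b \<sigma> l x) + b (Suc l)"

definition GradNetC :: "nat \<Rightarrow> real^'d^'n \<Rightarrow> (nat \<Rightarrow> real^'n) \<Rightarrow> (nat \<Rightarrow> real^'n) \<Rightarrow> (nat \<Rightarrow> real^'n)
              \<Rightarrow> real^'d \<Rightarrow> (nat \<Rightarrow> real^'n \<Rightarrow> real^'n) \<Rightarrow> real^'d \<Rightarrow> real^'d" where
  "GradNetC L W \<alpha> \<beta> b bL \<sigma> x =
     transpose W *v (\<alpha> L \<odot> \<sigma> L (gnc_z W \<alpha> \<beta> b \<sigma> (L - 1) x)) + bL"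

end

theory Submission
  imports Defs
begin

text \<open>
  Because every activation acts coordinatewise and every layer sees the input only through
  \<open>W x\<close>, the \<open>j\<close>-th coordinate of the last hidden layer is a continuous scalar function
  \<open>h\<^sub>j\<close> of \<open>(W x)\<^sub>j\<close> alone. Hence GradNetC has the form \<open>x \<mapsto> W\<^sup>T h(W x) + b\<^sub>L\<close>, which is
  the gradient of \<open>F x = \<Sum>\<^sub>j H\<^sub>j((W x)\<^sub>j) + b\<^sub>L \<bullet> x\<close>, where \<open>H\<^sub>j\<close> is an antiderivative of \<open>h\<^sub>j\<close>.
\<close>

lemma has_real_derivative_interval_integral:
  fixes h :: "real \<Rightarrow> real"
  assumes "continuous_on UNIV h"
  shows "((\<lambda>u. LBINT y=0..u. h y) has_real_derivative h x) (at x)"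
proof -
  let ?I = "{min 0 (x - 1)..max 0 (x + 1)}"
  have "((\<lambda>u. LBINT y=0..u. h y) has_vector_derivative h x) (at x within ?I)"
    using interval_integral_FTC2[of "min 0 (x - 1)" 0 "max 0 (x + 1)" h x]
      continuous_on_subset[OF assms]
    by (auto simp: zero_ereal_def)
  moreover have "x \<in> interior ?I" by auto
  ultimately show ?thesis
    by (metis at_within_interior has_real_derivative_iff_has_vector_derivative)
qed

lemma has_derivative_ridge_potential:
  fixes W :: "real^'d^'n" and h :: "'n \<Rightarrow> real \<Rightarrow> real"
  assumes "\<And>j. continuous_on UNIV (h j)"
  shows "((\<lambda>x. (\<Sum>j\<in>UNIV. LBINT y=0..(W *v x) $ j. h j y) + c \<bullet> x) has_derivative
          (\<lambda>v. (transpose W *v (\<chi> j. h j ((W *v x) $ j)) + c) \<bullet> v)) (at x)"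
proof -
  have row: "((\<lambda>x. (W *v x) $ j) has_derivative (\<lambda>v. (W *v v) $ j)) (at x)" for j
    by (intro bounded_linear_imp_has_derivative bounded_linear_compose[OF bounded_linear_vec_nth]
        matrix_vector_mul_bounded_linear)
  have summand: "((\<lambda>x. LBINT y=0..(W *v x) $ j. h j y) has_derivative
                  (\<lambda>v. h j ((W *v x) $ j) * (W *v v) $ j)) (at x)" for j
    using has_derivative_compose[OF row has_real_derivative_interval_integral[OF assms,
          unfolded has_field_derivative_def]]
    by (simp add: mult.commute)
  have "(transpose W *v (\<chi> j. h j ((W *v x) $ j))) \<bullet> v
        = (\<Sum>j\<in>UNIV. h j ((W *v x) $ j) * (W *v v) $ j)" for v
    by (simp add: dot_lmul_matrix) (simp add: inner_vec_def)
  then show ?thesis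
    unfolding inner_add_left
    by (simp only:) (intro has_derivative_add has_derivative_sum summand
        has_derivative_inner_right has_derivative_ident)
qed

lemma is_gradnet_ridge:
  fixes W :: "real^'d^'n" and h :: "'n \<Rightarrow> real \<Rightarrow> real"
  assumes "\<And>j. continuous_on UNIV (h j)"
  shows "is_gradnet (\<lambda>x. transpose W *v (\<chi> j. h j ((W *v x) $ j)) + c)"
proof -
  have "continuous_on UNIV (\<lambda>x. \<chi> j. h j ((W *v x) $ j))"
    by (intro continuous_on_vec_lambda continuous_on_compose2[OF assms])
      (auto intro!: continuous_intros)
  then have "continuous_on UNIV (\<lambda>x. transpose W *v (\<chi> j. h j ((W *v x) $ j)) + c)"
    by (intro continuous_on_add continuous_on_const
        continuous_on_compose2[OF matrix_vector_mult_linear_continuous_on]) auto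
  then show ?thesis
    unfolding is_gradnet_def using has_derivative_ridge_potential[of h] assms by blast
qed

lemma diff_elementwise_activation_nth:
  assumes "diff_elementwise_activation \<sigma>"
  shows "\<sigma> z $ j = \<sigma> (vec (z $ j)) $ j"
  using assms unfolding diff_elementwise_activation_def by auto

lemma diff_elementwise_activation_continuous_nth:
  assumes "diff_elementwise_activation \<sigma>"
  shows "continuous_on UNIV (\<lambda>t. \<sigma> (vec t) $ j)"
proof -
  obtain s where s: "\<And>z. \<sigma> z = (\<chi> j. s j (z $ j))" "\<And>j t. s j differentiable (at t)"
    using assms unfolding diff_elementwise_activation_def by auto
  have "continuous_on UNIV (s j)"
    using s(2) by (simp add: continuous_at_imp_continuous_on differentiable_imp_continuous_within)
  then show ?thesis by (simp add: s(1))
qed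

text \<open>The \<open>j\<close>-th hidden coordinate as a function of \<open>t = (W x)\<^sub>j\<close>; here
  \<open>\<sigma> (vec t) $ j\<close> is the scalar activation \<open>s\<^sub>j t\<close>.\<close>

fun layer_scalar :: "(nat \<Rightarrow> real^'n) \<Rightarrow> (nat \<Rightarrow> real^'n) \<Rightarrow> (nat \<Rightarrow> real^'n)
                     \<Rightarrow> (nat \<Rightarrow> real^'n \<Rightarrow> real^'n) \<Rightarrow> nat \<Rightarrow> 'n \<Rightarrow> real \<Rightarrow> real" where
  "layer_scalar \<alpha> \<beta> b \<sigma> 0 j t = \<beta> 0 $ j * t + b 0 $ j"
| "layer_scalar \<alpha> \<beta> b \<sigma> (Suc l) j t = \<beta> (Suc l) $ j * t
     + \<alpha> (Suc l) $ j * \<sigma> (Suc l) (vec (layer_scalar \<alpha> \<beta> b \<sigma> l j t)) $ j + b (Suc l) $ j"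

lemma gnc_z_nth_eq_layer_scalar:
  assumes "\<forall>l\<in>{1..L}. diff_elementwise_activation (\<sigma> l)" and "l \<le> L"
  shows "gnc_z W \<alpha> \<beta> b \<sigma> l x $ j = layer_scalar \<alpha> \<beta> b \<sigma> l j ((W *v x) $ j)"
  using assms(2)
proof (induction l)
  case 0
  then show ?case by (simp add: hadamard_def)
next
  case (Suc l)
  then have "diff_elementwise_activation (\<sigma> (Suc l))" using assms(1) by auto
  with Suc show ?case
    by (simp add: hadamard_def diff_elementwise_activation_nth[of _ "gnc_z W \<alpha> \<beta> b \<sigma> l x"])
qed

lemma continuous_on_layer_scalar:
  assumes "\<forall>l\<in>{1..L}. diff_elementwise_activation (\<sigma> l)" and "l \<le> L"
  shows "continuous_on UNIV (layer_scalar \<alpha> \<beta> b \<sigma> l j)"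
  using assms(2)
proof (induction l)
  case 0
  then show ?case by (simp add: continuous_intros)
next
  case (Suc l)
  then have "continuous_on UNIV (\<lambda>t. \<sigma> (Suc l) (vec t) $ j)"
    using assms(1) by (auto intro: diff_elementwise_activation_continuous_nth)
  then have "continuous_on UNIV (\<lambda>t. \<sigma> (Suc l) (vec (layer_scalar \<alpha> \<beta> b \<sigma> l j t)) $ j)"
    by (rule continuous_on_compose2) (use Suc in auto)
  then show ?case
    by (auto intro!: continuous_on_add continuous_on_mult continuous_on_const continuous_on_id)
qed

theorem theorem8:
  fixes L :: nat and W :: "real^'d^'n"
    and \<alpha> \<beta> b :: "nat \<Rightarrow> real^'n" and bL :: "real^'d"
    and \<sigma> :: "nat \<Rightarrow> real^'n \<Rightarrow> real^'n"
  assumes "L \<ge> 1"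
    and "\<forall>l\<in>{1..L}. diff_elementwise_activation (\<sigma> l)"
  shows "is_gradnet (GradNetC L W \<alpha> \<beta> b bL \<sigma>)"
proof -
  define h where "h j t = \<alpha> L $ j * \<sigma> L (vec (layer_scalar \<alpha> \<beta> b \<sigma> (L - 1) j t)) $ j" for j t
  have act_L: "diff_elementwise_activation (\<sigma> L)"
    using assms by auto
  have "continuous_on UNIV (\<lambda>t. \<sigma> L (vec (layer_scalar \<alpha> \<beta> b \<sigma> (L - 1) j t)) $ j)" for j
    by (rule continuous_on_compose2[OF diff_elementwise_activation_continuous_nth[OF act_L]])
      (auto intro: continuous_on_layer_scalar[OF assms(2)])
  then have "continuous_on UNIV (h j)" for j
    unfolding h_def by (auto intro!: continuous_on_mult continuous_on_const)
  moreover have "GradNetC L W \<alpha> \<beta> b bL \<sigma> = (\<lambda>x. transpose W *v (\<chi> j. h j ((W *v x) $ j)) + bL)"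
  proof
    fix x
    have "\<sigma> L (gnc_z W \<alpha> \<beta> b \<sigma> (L - 1) x) $ j
          = \<sigma> L (vec (layer_scalar \<alpha> \<beta> b \<sigma> (L - 1) j ((W *v x) $ j))) $ j" for j
      by (metis act_L diff_elementwise_activation_nth diff_le_self
          gnc_z_nth_eq_layer_scalar[OF assms(2)])
    then show "GradNetC L W \<alpha> \<beta> b bL \<sigma> x = transpose W *v (\<chi> j. h j ((W *v x) $ j)) + bL"
      by (simp add: GradNetC_def hadamard_def h_def)
  qed
  ultimately show ?thesis
    using is_gradnet_ridge[of h W bL] by (simp only:)
qed

end
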